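(* Let $d\ge1$, $k\ge d+2$ and $\alpha\in(0,1)$. Then there exist absolutely continuous probability measures $\mu_1,\dots,\mu_k$ on $\mathbb R^d$ such that there is no convex set $C\subset\mathbb R^d$ with $\mu_1(C)=\dots=\mu_k(C)=\alpha$. *)

theory Defs
  imports "HOL-Probability.Probability"
begin

end

theory Submission
  imports Defs
begin

(* Let d = CARD('n) and
   N = 4 d^2.  Take the uniform distributions on d+2 closed sup-norm unit cubes: one centred
   at N e_t for each coordinate direction t, one centred at -N (1,...,1), and one (repeated
   for all remaining indices) centred at the origin.
   A set of measure alpha > 0 under a uniform cube distribution meets the cube, and a set of
   measure alpha < 1 does not contain it.  So it suffices to show that a convex set C meeting
   all d+1 outer cubes contains the whole origin cube.  If some x in the origin cube lies
   outside C, a separating hyperplane gives a <> 0 with a.x <= a.y on C, hence every outer cube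
   contains a point y with a.x <= a.y.  Since moving inside a cube changes a.y by at most
   d*max|a_i|, this forces every coordinate of a to be >= -max|a_i|/(2d) while the
   coordinate sum is <= max|a_i|/(2d), which is impossible for a nonzero vector. *)

definition cube :: "real^'n \<Rightarrow> (real^'n) set" where
  "cube v = cbox (v - (\<chi> i. 1)) (v + (\<chi> i. 1))"

lemma mem_cube: "x \<in> cube v \<longleftrightarrow> (\<forall>i. \<bar>x$i - v$i\<bar> \<le> 1)"
  unfolding cube_def mem_box_cart by (simp add: abs_le_iff algebra_simps; blast)

lemma emeasure_cube_pos: "emeasure lebesgue (cube v) \<noteq> 0"
proof -
  have "prod (\<lambda>b. (2 * (\<chi> i. 1)) \<bullet> (b::real^'n)) (\<Union>x. {axis x 1}) > 0"
    by (rule prod_pos) (auto simp: inner_axis)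
  then show ?thesis
    unfolding cube_def
    by (simp add: emeasure_lborel_cbox_eq Basis_vec_def inner_axis ennreal_eq_0_iff not_le)
qed

lemma emeasure_cube_finite: "emeasure lebesgue (cube v) \<noteq> \<infinity>"
  unfolding cube_def using emeasure_lborel_cbox_finite by (simp add: less_top)

lemma uniform_cube_admissible:
  fixes v :: "real^'n"
  defines "\<mu> \<equiv> uniform_measure lebesgue (cube v)"
  shows "prob_space \<mu> \<and> sets \<mu> = sets lebesgue \<and> absolutely_continuous lebesgue \<mu>"
proof (intro conjI)
  show "prob_space \<mu>"
    unfolding \<mu>_def by (rule prob_space_uniform_measure[OF emeasure_cube_pos emeasure_cube_finite])
  show "sets \<mu> = sets lebesgue" unfolding \<mu>_def by simp
  have "cube v \<in> sets lebesgue" unfolding cube_def by simp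
  then show "absolutely_continuous lebesgue \<mu>"
    unfolding \<mu>_def uniform_measure_def
    by (intro absolutely_continuousI_density borel_measurable_divide_ennreal
        borel_measurable_indicator measurable_const) auto
qed

lemma uniform_cube_measure_strict:
  fixes v :: "real^'n"
  assumes "measure (uniform_measure lebesgue (cube v)) C = \<alpha>" "0 < \<alpha>" "\<alpha> < 1"
  shows "C \<inter> cube v \<noteq> {}" "\<not> cube v \<subseteq> C"
proof -
  have C: "C \<in> sets lebesgue"
    using assms measure_notin_sets[of C "uniform_measure lebesgue (cube v)"] by force
  have \<alpha>: "\<alpha> = measure lebesgue (cube v \<inter> C) / measure lebesgue (cube v)"
    using assms(1) measure_uniform_measure[OF emeasure_cube_pos emeasure_cube_finite C] by simp
  show "C \<inter> cube v \<noteq> {}"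
    using \<alpha> assms(2) by (auto simp: Int_commute)
  have "measure lebesgue (cube v) \<noteq> 0"
    using emeasure_cube_pos[of v] emeasure_cube_finite[of v]
    by (simp add: emeasure_eq_ennreal_measure)
  then show "\<not> cube v \<subseteq> C"
    using \<alpha> assms(3) by (auto simp: Int_absorb2)
qed

lemma inner_deviation_cube:
  fixes a y v :: "real^'n"
  assumes "y \<in> cube v" "\<And>i. \<bar>a$i\<bar> \<le> m"
  shows "\<bar>a \<bullet> y - a \<bullet> v\<bar> \<le> real CARD('n) * m"
proof -
  have "a \<bullet> y - a \<bullet> v = (\<Sum>i\<in>UNIV. a$i * (y$i - v$i))"
    by (simp add: inner_vec_def sum_subtractf right_diff_distrib)
  also have "\<bar>\<dots>\<bar> \<le> (\<Sum>i\<in>UNIV. \<bar>a$i * (y$i - v$i)\<bar>)" by (rule sum_abs)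
  also have "\<dots> \<le> (\<Sum>i\<in>(UNIV::'n set). m)"
  proof (rule sum_mono)
    fix i
    have "\<bar>y$i - v$i\<bar> \<le> 1" using assms(1) by (simp add: mem_cube)
    then have "\<bar>a$i\<bar> * \<bar>y$i - v$i\<bar> \<le> m * 1"
      using assms(2)[of i] by (intro mult_mono) auto
    then show "\<bar>a$i * (y$i - v$i)\<bar> \<le> m" by (simp add: abs_mult)
  qed
  finally show ?thesis by simp
qed

(* The coordinate of
   modulus m must equal +m, and then the sum is at least 2dm - (d-1)m > m (scaled by 2d). *)
lemma coordinate_sum_contradiction:
  fixes a :: "real^'n"
  defines "D \<equiv> real CARD('n)" and "m \<equiv> Max (range (\<lambda>i. \<bar>a$i\<bar>))"
  assumes "a \<noteq> 0"
    and lower: "\<And>t. 2 * D * a$t + m \<ge> 0"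
    and upper: "2 * D * (\<Sum>i\<in>UNIV. a$i) \<le> m"
  shows False
proof -
  have fin: "finite (range (\<lambda>i. \<bar>a$i\<bar>))" by simp
  have bound: "\<bar>a$i\<bar> \<le> m" for i unfolding m_def by (rule Max_ge[OF fin]) auto
  have "m \<in> range (\<lambda>i. \<bar>a$i\<bar>)" unfolding m_def by (rule Max_in[OF fin]) auto
  then obtain i0 where i0: "\<bar>a$i0\<bar> = m" by auto
  obtain j where "a$j \<noteq> 0" using \<open>a \<noteq> 0\<close> by (auto simp: vec_eq_iff)
  then have m_pos: "m > 0" using bound[of j] by linarith
  have D1: "D \<ge> 1" unfolding D_def using card_ge_0_finite[of "UNIV::'n set"] by simp
  have top: "a$i0 = m"
  proof (rule ccontr)
    assume "a$i0 \<noteq> m"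
    then have "a$i0 = - m" using i0 by auto
    then show False using lower[of i0] D1 m_pos by (simp add: algebra_simps)
  qed
  have rest: "(\<Sum>i\<in>UNIV - {i0}. 2 * D * a$i) \<ge> (\<Sum>i\<in>(UNIV::'n set) - {i0}. - m)"
    by (rule sum_mono) (use lower in \<open>smt (verit)\<close>)
  have rest_card: "(\<Sum>i\<in>(UNIV::'n set) - {i0}. - m) = m - D * m"
    by (simp add: D_def card_Diff_singleton algebra_simps)
  have "2 * D * (\<Sum>i\<in>UNIV. a$i) = 2 * D * a$i0 + (\<Sum>i\<in>UNIV - {i0}. 2 * D * a$i)"
    unfolding sum_distrib_left by (simp add: sum.remove)
  then have "2 * D * (\<Sum>i\<in>UNIV. a$i) \<ge> 2 * (D * m) + m - D * m"
    using top rest rest_card by simp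
  moreover have "D * m > 0" using D1 m_pos by simp
  ultimately show False using upper by linarith
qed

lemma convex_meeting_outer_cubes:
  fixes C :: "(real^'n) set"
  defines "N \<equiv> 4 * real CARD('n) * real CARD('n)"
  assumes "convex C"
    and axis_cubes: "\<And>t. C \<inter> cube (N *\<^sub>R axis t 1) \<noteq> {}"
    and diagonal_cube: "C \<inter> cube (- (N *\<^sub>R (\<chi> i. 1))) \<noteq> {}"
  shows "cube 0 \<subseteq> C"
proof
  fix x :: "real^'n" assume x: "x \<in> cube 0"
  show "x \<in> C"
  proof (rule ccontr)
    assume "x \<notin> C"
    have "convex ((\<lambda>y. y - x) ` C)" "0 \<notin> (\<lambda>y. y - x) ` C"
      using \<open>convex C\<close> \<open>x \<notin> C\<close> by (auto simp: convex_translation_subtract_eq)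
    then obtain a :: "real^'n" where a: "a \<noteq> 0" "\<forall>z\<in>(\<lambda>y. y - x) ` C. 0 \<le> a \<bullet> z"
      using separating_hyperplane_set_0 by blast
    have sep: "a \<bullet> x \<le> a \<bullet> y" if "y \<in> C" for y
      using a(2) that by (auto simp: inner_diff_right)
    define D where "D = real CARD('n)"
    define m where "m = Max (range (\<lambda>i. \<bar>a$i\<bar>))"
    have bound: "\<bar>a$i\<bar> \<le> m" for i unfolding m_def by (rule Max_ge) auto
    have D1: "D \<ge> 1" unfolding D_def using card_ge_0_finite[of "UNIV::'n set"] by simp
    have near: "\<bar>a \<bullet> y - a \<bullet> v\<bar> \<le> D * m" if "y \<in> cube v" for y v
      using inner_deviation_cube[OF that bound] D_def by simp
    have x_small: "\<bar>a \<bullet> x\<bar> \<le> D * m" using near[OF x] by simp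
    have lower: "2 * D * a$t + m \<ge> 0" for t
    proof -
      obtain y where "y \<in> C" "y \<in> cube (N *\<^sub>R axis t 1)" using axis_cubes[of t] by blast
      then have "N * a$t + 2 * D * m \<ge> 0"
        using sep near x_small by (force simp: inner_axis)
      then have "2 * D * (2 * D * a$t + m) \<ge> 0" unfolding N_def D_def by (simp add: algebra_simps)
      then show ?thesis using D1 by (simp add: zero_le_mult_iff)
    qed
    have upper: "2 * D * (\<Sum>i\<in>UNIV. a$i) \<le> m"
    proof -
      obtain y where "y \<in> C" "y \<in> cube (- (N *\<^sub>R (\<chi> i. 1)))" using diagonal_cube by blast
      moreover have "a \<bullet> (- (N *\<^sub>R (\<chi> i. 1))) = - N * (\<Sum>i\<in>UNIV. a$i)"
        by (simp add: inner_vec_def sum_distrib_left mult.commute)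
      ultimately have "- N * (\<Sum>i\<in>UNIV. a$i) + 2 * D * m \<ge> 0"
        using sep near[of y] x_small by fastforce
      then have "2 * D * (m - 2 * D * (\<Sum>i\<in>UNIV. a$i)) \<ge> 0"
        unfolding N_def D_def by (simp add: algebra_simps)
      then show ?thesis using D1 by (simp add: zero_le_mult_iff)
    qed
    show False
      using coordinate_sum_contradiction[OF a(1)] lower upper unfolding D_def m_def by blast
  qed
qed

lemma no_convex_equal_measure_set:
  fixes centre :: "nat \<Rightarrow> real^'n" and C :: "(real^'n) set"
  defines "N \<equiv> 4 * real CARD('n) * real CARD('n)"
  assumes axis_centres: "\<And>t. \<exists>i<k. centre i = N *\<^sub>R axis t 1"
    and diagonal_centre: "\<exists>i<k. centre i = - (N *\<^sub>R (\<chi> i. 1))"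
    and origin_centre: "\<exists>i<k. centre i = 0"
    and "convex C"
    and equal: "\<And>i. i < k \<Longrightarrow> measure (uniform_measure lebesgue (cube (centre i))) C = \<alpha>"
    and "0 < \<alpha>" "\<alpha> < 1"
  shows False
proof -
  have meets: "C \<inter> cube (centre i) \<noteq> {}" if "i < k" for i
    using uniform_cube_measure_strict(1)[OF equal[OF that] \<open>0 < \<alpha>\<close> \<open>\<alpha> < 1\<close>] .
  have "C \<inter> cube (N *\<^sub>R axis t 1) \<noteq> {}" for t
  proof -
    obtain i where "i < k" "centre i = N *\<^sub>R axis t 1" using axis_centres[of t] by blast
    then show ?thesis using meets[of i] by simp
  qed
  moreover have "C \<inter> cube (- (N *\<^sub>R (\<chi> i. 1))) \<noteq> {}"
  proof -
    obtain i where "i < k" "centre i = - (N *\<^sub>R (\<chi> i. 1))" using diagonal_centre by blast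
    then show ?thesis using meets[of i] by simp
  qed
  ultimately have "cube 0 \<subseteq> C"
    using convex_meeting_outer_cubes[OF \<open>convex C\<close>] unfolding N_def by blast
  moreover obtain i where "i < k" "centre i = 0" using origin_centre by blast
  ultimately show False
    using uniform_cube_measure_strict(2)[OF equal[OF \<open>i < k\<close>] \<open>0 < \<alpha>\<close> \<open>\<alpha> < 1\<close>] by simp
qed

theorem mainTheorem8:
  fixes k :: nat and \<alpha> :: real
  assumes "k \<ge> CARD('n::finite) + 2"
    and "0 < \<alpha>" and "\<alpha> < 1"
  shows "\<exists>\<mu> :: nat \<Rightarrow> (real ^ 'n) measure.
           (\<forall>i<k. prob_space (\<mu> i) \<and> sets (\<mu> i) = sets lebesgue
                  \<and> absolutely_continuous lebesgue (\<mu> i)) \<and>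
           \<not> (\<exists>C :: (real ^ 'n) set. convex C \<and> (\<forall>i<k. measure (\<mu> i) C = \<alpha>))"
proof -
  define d where "d = CARD('n)"
  define N :: real where "N = 4 * real d * real d"
  obtain h :: "nat \<Rightarrow> 'n" where h: "h ` {0..<d} = UNIV"
    using ex_bij_betw_nat_finite[of "UNIV::'n set"] unfolding d_def bij_betw_def by auto
  define centre :: "nat \<Rightarrow> real^'n" where
    "centre i = (if i < d then N *\<^sub>R axis (h i) 1 else if i = d then - (N *\<^sub>R (\<chi> i. 1)) else 0)"
    for i
  have axis_centres: "\<exists>i<k. centre i = N *\<^sub>R axis t 1" for t
  proof -
    obtain i where "i < d" "h i = t" using h by (metis UNIV_I atLeastLessThan_iff imageE)
    then show ?thesis using assms(1) unfolding d_def by (intro exI[of _ i]) (simp add: centre_def d_def)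
  qed
  have "centre d = - (N *\<^sub>R (\<chi> i. 1))" "centre (d + 1) = 0" by (simp_all add: centre_def)
  moreover have "d < k" "d + 1 < k" using assms(1) by (simp_all add: d_def)
  ultimately have diagonal_centre: "\<exists>i<k. centre i = - (N *\<^sub>R (\<chi> i. 1))"
    and origin_centre: "\<exists>i<k. centre i = 0" by blast+
  have no_convex: "\<not> convex C"
    if "\<And>i. i < k \<Longrightarrow> measure (uniform_measure lebesgue (cube (centre i))) C = \<alpha>" for C
    using no_convex_equal_measure_set[of k centre C \<alpha>] axis_centres diagonal_centre origin_centre
      that assms(2,3) unfolding N_def d_def by blast
  show ?thesis
    by (rule exI[of _ "\<lambda>i. uniform_measure lebesgue (cube (centre i))"])
      (use uniform_cube_admissible no_convex in blast)
qed

end
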